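(* Let $M=\{m_1,m_2,m_3\}$ and $N=\{n_1,n_2,n_3\}$ be 3-element subsets of $\mathbb{N}$ (so the $m_i$ are pairwise distinct and the $n_i$ are pairwise distinct). For $X\subseteq\mathbb{N}$ let $S_X$ be the subsemigroup of $\mathbb{N}\times\mathbb{N}$ generated by $\{(1,x): x\in X\}$. Then there exists an isomorphism $\varphi:S_M\to S_N$ with $\varphi(1,m_i)=(1,n_i)$ for $i=1,2,3$ if and only if $$n_2(m_3-m_1)=n_1(m_3-m_2)+n_3(m_2-m_1).$$
   Context: $\mathbb{N}=\{1,2,3,\dots\}$ under addition, $\mathbb{N}\times\mathbb{N}$ with componentwise addition. *)

theory Defs
  imports Main
begin

text \<open>Componentwise addition on N x N (N = positive integers, represented in nat).\<close>
definition padd :: "nat \<times> nat \<Rightarrow> nat \<times> nat \<Rightarrow> nat \<times> nat" where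
  "padd a b = (fst a + fst b, snd a + snd b)"

inductive_set gen_subsemigroup :: "nat set \<Rightarrow> (nat \<times> nat) set" for X :: "nat set" where
  gen: "x \<in> X \<Longrightarrow> (1, x) \<in> gen_subsemigroup X"
| add: "a \<in> gen_subsemigroup X \<Longrightarrow> b \<in> gen_subsemigroup X \<Longrightarrow> padd a b \<in> gen_subsemigroup X"

definition semigroup_iso :: "(nat \<times> nat) set \<Rightarrow> (nat \<times> nat) set \<Rightarrow> (nat \<times> nat \<Rightarrow> nat \<times> nat) \<Rightarrow> bool" where
  "semigroup_iso S T \<phi> \<longleftrightarrow> bij_betw \<phi> S T \<and> (\<forall>a\<in>S. \<forall>b\<in>S. \<phi> (padd a b) = padd (\<phi> a) (\<phi> b))"

end

theory Submission
  imports Defs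
begin

text \<open>Every element of \<open>S_M\<close> is \<open>(k, s)\<close> with \<open>s = c\<^sub>1 m\<^sub>1 + c\<^sub>2 m\<^sub>2 + c\<^sub>3 m\<^sub>3\<close> and
  \<open>k = c\<^sub>1 + c\<^sub>2 + c\<^sub>3 > 0\<close>, and an isomorphism fixing generators must send the element with
  coefficients \<open>c\<close> in \<open>S_M\<close> to the one with the same coefficients in \<open>S_N\<close>. It is well defined
  exactly when every integer relation \<open>v\<^sub>1 + v\<^sub>2 + v\<^sub>3 = 0\<close>, \<open>\<Sum> v\<^sub>i m\<^sub>i = 0\<close> also satisfies
  \<open>\<Sum> v\<^sub>i n\<^sub>i = 0\<close>; as the \<open>m\<^sub>i\<close> are distinct these relations form a line, spanned by
  \<open>(m\<^sub>3 - m\<^sub>2, m\<^sub>1 - m\<^sub>3, m\<^sub>2 - m\<^sub>1)\<close>, so the condition is that the points \<open>(m\<^sub>i, n\<^sub>i)\<close> are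
  collinear. Conversely, if they lie on the line \<open>d y = A + B x\<close> with \<open>B \<noteq> 0\<close>, then
  \<open>(k, s) \<mapsto> (k, (A k + B s) / d)\<close> is the required isomorphism.\<close>

definition gen_comb :: "nat \<Rightarrow> nat \<Rightarrow> nat \<Rightarrow> nat \<Rightarrow> nat \<Rightarrow> nat \<Rightarrow> nat \<times> nat" where
  "gen_comb c1 c2 c3 x1 x2 x3 = (c1 + c2 + c3, c1 * x1 + c2 * x2 + c3 * x3)"

lemma gen_comb_units:
  "gen_comb 1 0 0 x1 x2 x3 = (1, x1)"
  "gen_comb 0 1 0 x1 x2 x3 = (1, x2)"
  "gen_comb 0 0 1 x1 x2 x3 = (1, x3)"
  by (simp_all add: gen_comb_def)

lemma padd_gen_comb:
  "padd (gen_comb a1 a2 a3 x1 x2 x3) (gen_comb b1 b2 b3 x1 x2 x3)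
     = gen_comb (a1 + b1) (a2 + b2) (a3 + b3) x1 x2 x3"
  by (simp add: gen_comb_def padd_def algebra_simps)

lemma gen_comb_eq_iff:
  "gen_comb c1 c2 c3 x1 x2 x3 = gen_comb d1 d2 d3 x1 x2 x3 \<longleftrightarrow>
     c1 + c2 + c3 = d1 + d2 + d3 \<and>
     (int c1 - int d1) * int x1 + (int c2 - int d2) * int x2 + (int c3 - int d3) * int x3 = 0"
proof -
  have "c1 * x1 + c2 * x2 + c3 * x3 = d1 * x1 + d2 * x2 + d3 * x3 \<longleftrightarrow>
      int (c1 * x1 + c2 * x2 + c3 * x3) - int (d1 * x1 + d2 * x2 + d3 * x3) = 0"
    by linarith
  also have "\<dots> \<longleftrightarrow> (int c1 - int d1) * int x1 + (int c2 - int d2) * int x2 + (int c3 - int d3) * int x3 = 0"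
    by (simp add: algebra_simps)
  finally show ?thesis
    by (simp add: gen_comb_def)
qed

lemma positive_coeffs_induct [consumes 1, case_names unit1 unit2 unit3 add]:
  fixes c1 c2 c3 :: nat
  assumes "0 < c1 + c2 + c3"
    and unit: "P 1 0 0" "P 0 1 0" "P 0 0 1"
    and add: "\<And>a1 a2 a3 b1 b2 b3. 0 < a1 + a2 + a3 \<Longrightarrow> 0 < b1 + b2 + b3 \<Longrightarrow>
      P a1 a2 a3 \<Longrightarrow> P b1 b2 b3 \<Longrightarrow> P (a1 + b1) (a2 + b2) (a3 + b3)"
  shows "P c1 c2 c3"
  using assms(1)
proof (induction "c1 + c2 + c3" arbitrary: c1 c2 c3 rule: less_induct)
  case less
  show ?case
  proof (cases "c1 + c2 + c3 = 1")
    case True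
    then consider "c1 = 1" "c2 = 0" "c3 = 0" | "c1 = 0" "c2 = 1" "c3 = 0" | "c1 = 0" "c2 = 0" "c3 = 1"
      by linarith
    then show ?thesis
      by cases (simp_all only: unit)
  next
    case False
    then consider "0 < c1" | "0 < c2" | "0 < c3"
      using less.prems by linarith
    then show ?thesis
    proof cases
      case 1
      have "P (c1 - 1) c2 c3"
        using 1 False less.prems by (intro less.hyps) linarith+
      then have "P (1 + (c1 - 1)) (0 + c2) (0 + c3)"
        using 1 False less.prems by (intro add unit) linarith+
      with 1 show ?thesis by simp
    next
      case 2
      have "P c1 (c2 - 1) c3"
        using 2 False less.prems by (intro less.hyps) linarith+
      then have "P (0 + c1) (1 + (c2 - 1)) (0 + c3)"
        using 2 False less.prems by (intro add unit) linarith+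
      with 2 show ?thesis by simp
    next
      case 3
      have "P c1 c2 (c3 - 1)"
        using 3 False less.prems by (intro less.hyps) linarith+
      then have "P (0 + c1) (0 + c2) (1 + (c3 - 1))"
        using 3 False less.prems by (intro add unit) linarith+
      with 3 show ?thesis by simp
    qed
  qed
qed

lemma gen_comb_in_gen_subsemigroup:
  assumes "0 < c1 + c2 + c3"
  shows "gen_comb c1 c2 c3 x1 x2 x3 \<in> gen_subsemigroup {x1, x2, x3}"
  using assms
proof (induction rule: positive_coeffs_induct)
  case unit1
  show ?case
    unfolding gen_comb_units by (rule gen_subsemigroup.gen) simp
next
  case unit2
  show ?case
    unfolding gen_comb_units by (rule gen_subsemigroup.gen) simp
next
  case unit3
  show ?case
    unfolding gen_comb_units by (rule gen_subsemigroup.gen) simp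
next
  case (add a1 a2 a3 b1 b2 b3)
  then show ?case
    using gen_subsemigroup.add[OF add.IH] by (simp only: padd_gen_comb)
qed

lemma gen_subsemigroup_gen_comb:
  assumes "p \<in> gen_subsemigroup {x1, x2, x3}"
  obtains c1 c2 c3 where "0 < c1 + c2 + c3" "p = gen_comb c1 c2 c3 x1 x2 x3"
proof -
  from assms have "\<exists>c1 c2 c3. 0 < c1 + c2 + c3 \<and> p = gen_comb c1 c2 c3 x1 x2 x3"
  proof induction
    case (gen x)
    then consider "x = x1" | "x = x2" | "x = x3"
      by blast
    then show ?case
    proof cases
      case 1
      then show ?thesis by (intro exI[of _ 1] exI[of _ 0]) (simp add: gen_comb_def)
    next
      case 2
      then show ?thesis by (intro exI[of _ 0] exI[of _ 1] exI[of _ 0]) (simp add: gen_comb_def)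
    next
      case 3
      then show ?thesis by (intro exI[of _ 0] exI[of _ 1]) (simp add: gen_comb_def)
    qed
  next
    case (add a b)
    obtain a1 a2 a3 where pos: "0 < a1 + a2 + a3" and a: "a = gen_comb a1 a2 a3 x1 x2 x3"
      using add.IH(1) by (elim exE conjE)
    obtain b1 b2 b3 where b: "b = gen_comb b1 b2 b3 x1 x2 x3"
      using add.IH(2) by (elim exE conjE)
    have "0 < (a1 + b1) + (a2 + b2) + (a3 + b3)"
      using pos by linarith
    moreover have "padd a b = gen_comb (a1 + b1) (a2 + b2) (a3 + b3) x1 x2 x3"
      unfolding a b by (rule padd_gen_comb)
    ultimately show ?case
      by (intro exI conjI)
  qed
  then show ?thesis
    using that by (elim exE conjE)
qed

lemma hom_gen_comb:
  assumes hom: "\<forall>a\<in>gen_subsemigroup {m1, m2, m3}. \<forall>b\<in>gen_subsemigroup {m1, m2, m3}.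
      \<phi> (padd a b) = padd (\<phi> a) (\<phi> b)"
    and "\<phi> (1, m1) = (1, n1)" "\<phi> (1, m2) = (1, n2)" "\<phi> (1, m3) = (1, n3)"
    and "0 < c1 + c2 + c3"
  shows "\<phi> (gen_comb c1 c2 c3 m1 m2 m3) = gen_comb c1 c2 c3 n1 n2 n3"
  using assms(5)
proof (induction rule: positive_coeffs_induct)
  case (add a1 a2 a3 b1 b2 b3)
  have "\<phi> (gen_comb (a1 + b1) (a2 + b2) (a3 + b3) m1 m2 m3)
      = \<phi> (padd (gen_comb a1 a2 a3 m1 m2 m3) (gen_comb b1 b2 b3 m1 m2 m3))"
    by (simp only: padd_gen_comb)
  also have "\<dots> = padd (\<phi> (gen_comb a1 a2 a3 m1 m2 m3)) (\<phi> (gen_comb b1 b2 b3 m1 m2 m3))"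
    using hom add.hyps by (simp add: gen_comb_in_gen_subsemigroup)
  also have "\<dots> = gen_comb (a1 + b1) (a2 + b2) (a3 + b3) n1 n2 n3"
    by (simp only: add.IH padd_gen_comb)
  finally show ?case .
qed (use assms(2-4) in \<open>simp_all add: gen_comb_def\<close>)

text \<open>A relation among the \<open>(1, m\<^sub>i)\<close> with integer coefficients \<open>v\<^sub>i\<close> is split into the
  coefficient triples \<open>v\<^sup>+\<close> and \<open>v\<^sup>-\<close>, both nonzero since \<open>v\<^sub>1 + v\<^sub>2 + v\<^sub>3 = 0\<close>.\<close>

lemma collinear_if_relations_transfer:
  fixes m1 m2 m3 n1 n2 n3 :: nat
  assumes "m1 \<noteq> m2"
    and transfer: "\<And>c1 c2 c3 d1 d2 d3. 0 < c1 + c2 + c3 \<Longrightarrow> 0 < d1 + d2 + d3 \<Longrightarrow>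
      gen_comb c1 c2 c3 m1 m2 m3 = gen_comb d1 d2 d3 m1 m2 m3 \<Longrightarrow>
      gen_comb c1 c2 c3 n1 n2 n3 = gen_comb d1 d2 d3 n1 n2 n3"
  shows "int n2 * (int m3 - int m1) = int n1 * (int m3 - int m2) + int n3 * (int m2 - int m1)"
proof -
  define v1 where "v1 = int m3 - int m2"
  define v2 where "v2 = int m1 - int m3"
  define v3 where "v3 = int m2 - int m1"
  have split: "int (nat v) - int (nat (- v)) = v" for v :: int
    by simp
  have "v3 \<noteq> 0" "v1 + v2 + v3 = 0"
    using assms(1) by (simp_all add: v1_def v2_def v3_def)
  then have pos: "0 < nat v1 + nat v2 + nat v3" "0 < nat (- v1) + nat (- v2) + nat (- v3)"
    by linarith+
  have "gen_comb (nat v1) (nat v2) (nat v3) m1 m2 m3 = gen_comb (nat (- v1)) (nat (- v2)) (nat (- v3)) m1 m2 m3"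
    unfolding gen_comb_eq_iff split by (simp add: v1_def v2_def v3_def algebra_simps)
  then have "gen_comb (nat v1) (nat v2) (nat v3) n1 n2 n3 = gen_comb (nat (- v1)) (nat (- v2)) (nat (- v3)) n1 n2 n3"
    by (rule transfer[OF pos])
  then have "v1 * int n1 + v2 * int n2 + v3 * int n3 = 0"
    unfolding gen_comb_eq_iff split by simp
  then show ?thesis
    by (simp add: v1_def v2_def v3_def algebra_simps)
qed

lemma collinear_if_semigroup_iso:
  assumes "m1 \<noteq> m2"
    and iso: "semigroup_iso (gen_subsemigroup {m1, m2, m3}) (gen_subsemigroup {n1, n2, n3}) \<phi>"
    and gens: "\<phi> (1, m1) = (1, n1)" "\<phi> (1, m2) = (1, n2)" "\<phi> (1, m3) = (1, n3)"
  shows "int n2 * (int m3 - int m1) = int n1 * (int m3 - int m2) + int n3 * (int m2 - int m1)"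
proof (rule collinear_if_relations_transfer[OF \<open>m1 \<noteq> m2\<close>])
  note map = hom_gen_comb[OF iso[unfolded semigroup_iso_def, THEN conjunct2] gens]
  fix c1 c2 c3 d1 d2 d3 :: nat
  assume "0 < c1 + c2 + c3" "0 < d1 + d2 + d3"
    and "gen_comb c1 c2 c3 m1 m2 m3 = gen_comb d1 d2 d3 m1 m2 m3"
  then show "gen_comb c1 c2 c3 n1 n2 n3 = gen_comb d1 d2 d3 n1 n2 n3"
    using map[OF \<open>0 < c1 + c2 + c3\<close>] map[OF \<open>0 < d1 + d2 + d3\<close>] by simp
qed

lemma semigroup_iso_if_gen_comb:
  assumes map: "\<And>c1 c2 c3. \<phi> (gen_comb c1 c2 c3 m1 m2 m3) = gen_comb c1 c2 c3 n1 n2 n3"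
    and reflect: "\<And>c1 c2 c3 d1 d2 d3.
      gen_comb c1 c2 c3 n1 n2 n3 = gen_comb d1 d2 d3 n1 n2 n3 \<Longrightarrow>
      gen_comb c1 c2 c3 m1 m2 m3 = gen_comb d1 d2 d3 m1 m2 m3"
  shows "semigroup_iso (gen_subsemigroup {m1, m2, m3}) (gen_subsemigroup {n1, n2, n3}) \<phi>"
proof -
  have "inj_on \<phi> (gen_subsemigroup {m1, m2, m3})"
  proof (rule inj_onI)
    fix p q
    assume "p \<in> gen_subsemigroup {m1, m2, m3}" "q \<in> gen_subsemigroup {m1, m2, m3}" "\<phi> p = \<phi> q"
    moreover obtain c1 c2 c3 where p: "p = gen_comb c1 c2 c3 m1 m2 m3"
      using \<open>p \<in> gen_subsemigroup {m1, m2, m3}\<close> by (rule gen_subsemigroup_gen_comb)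
    moreover obtain e1 e2 e3 where q: "q = gen_comb e1 e2 e3 m1 m2 m3"
      using \<open>q \<in> gen_subsemigroup {m1, m2, m3}\<close> by (rule gen_subsemigroup_gen_comb)
    ultimately have "gen_comb c1 c2 c3 n1 n2 n3 = gen_comb e1 e2 e3 n1 n2 n3"
      by (simp only: map)
    then show "p = q"
      unfolding p q by (rule reflect)
  qed
  moreover have "\<phi> ` gen_subsemigroup {m1, m2, m3} = gen_subsemigroup {n1, n2, n3}"
  proof (intro equalityI subsetI)
    fix q
    assume "q \<in> \<phi> ` gen_subsemigroup {m1, m2, m3}"
    then obtain p where "p \<in> gen_subsemigroup {m1, m2, m3}" "q = \<phi> p"
      by blast
    then obtain c1 c2 c3 where "0 < c1 + c2 + c3" "q = gen_comb c1 c2 c3 n1 n2 n3"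
      by (elim gen_subsemigroup_gen_comb) (simp only: map)
    then show "q \<in> gen_subsemigroup {n1, n2, n3}"
      by (simp only: gen_comb_in_gen_subsemigroup)
  next
    fix q
    assume "q \<in> gen_subsemigroup {n1, n2, n3}"
    then obtain c1 c2 c3 where pos: "0 < c1 + c2 + c3" and q: "q = \<phi> (gen_comb c1 c2 c3 m1 m2 m3)"
      by (elim gen_subsemigroup_gen_comb) (simp only: map)
    from pos have "gen_comb c1 c2 c3 m1 m2 m3 \<in> gen_subsemigroup {m1, m2, m3}"
      by (rule gen_comb_in_gen_subsemigroup)
    with q show "q \<in> \<phi> ` gen_subsemigroup {m1, m2, m3}"
      by (rule image_eqI)
  qed
  moreover have "\<phi> (padd a b) = padd (\<phi> a) (\<phi> b)"
    if "a \<in> gen_subsemigroup {m1, m2, m3}" "b \<in> gen_subsemigroup {m1, m2, m3}" for a b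
    using that by (elim gen_subsemigroup_gen_comb) (simp only: map padd_gen_comb)
  ultimately show ?thesis
    by (simp add: semigroup_iso_def bij_betw_def)
qed

lemma div_affine_gen_comb:
  fixes A B d :: int
  assumes "d \<noteq> 0"
    and line: "d * int n1 = A + B * int m1" "d * int n2 = A + B * int m2" "d * int n3 = A + B * int m3"
  shows "(A * int (c1 + c2 + c3) + B * int (c1 * m1 + c2 * m2 + c3 * m3)) div d
    = int (c1 * n1 + c2 * n2 + c3 * n3)"
proof -
  have "A * int (c1 + c2 + c3) + B * int (c1 * m1 + c2 * m2 + c3 * m3)
      = int c1 * (A + B * int m1) + int c2 * (A + B * int m2) + int c3 * (A + B * int m3)"
    by (simp add: algebra_simps)
  also have "\<dots> = d * int (c1 * n1 + c2 * n2 + c3 * n3)"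
    by (simp add: line[symmetric] algebra_simps)
  finally show ?thesis
    by (simp only: nonzero_mult_div_cancel_left[OF \<open>d \<noteq> 0\<close>])
qed

lemma gen_comb_eq_if_affine_image:
  fixes A B d :: int
  assumes "B \<noteq> 0"
    and line: "d * int n1 = A + B * int m1" "d * int n2 = A + B * int m2" "d * int n3 = A + B * int m3"
    and "gen_comb c1 c2 c3 n1 n2 n3 = gen_comb e1 e2 e3 n1 n2 n3"
  shows "gen_comb c1 c2 c3 m1 m2 m3 = gen_comb e1 e2 e3 m1 m2 m3"
proof -
  have sums: "c1 + c2 + c3 = e1 + e2 + e3"
    and rel: "(int c1 - int e1) * int n1 + (int c2 - int e2) * int n2 + (int c3 - int e3) * int n3 = 0"
    using assms(5) unfolding gen_comb_eq_iff by simp_all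
  have "B * ((int c1 - int e1) * int m1 + (int c2 - int e2) * int m2 + (int c3 - int e3) * int m3)
      = (int c1 - int e1) * (A + B * int m1) + (int c2 - int e2) * (A + B * int m2)
        + (int c3 - int e3) * (A + B * int m3) - A * (int (c1 + c2 + c3) - int (e1 + e2 + e3))"
    by (simp add: algebra_simps)
  also have "\<dots> = d * ((int c1 - int e1) * int n1 + (int c2 - int e2) * int n2 + (int c3 - int e3) * int n3)"
    unfolding sums by (simp add: line[symmetric] algebra_simps)
  also have "\<dots> = 0"
    by (simp add: rel)
  finally show ?thesis
    using sums \<open>B \<noteq> 0\<close> unfolding gen_comb_eq_iff by simp
qed

lemma semigroup_iso_if_affine_line:
  fixes A B d :: int
  assumes "d \<noteq> 0" "B \<noteq> 0"
    and line: "d * int n1 = A + B * int m1" "d * int n2 = A + B * int m2" "d * int n3 = A + B * int m3"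
  defines "\<phi> \<equiv> \<lambda>p. (fst p, nat ((A * int (fst p) + B * int (snd p)) div d))"
  shows "semigroup_iso (gen_subsemigroup {m1, m2, m3}) (gen_subsemigroup {n1, n2, n3}) \<phi>"
    and "\<phi> (1, m1) = (1, n1)" "\<phi> (1, m2) = (1, n2)" "\<phi> (1, m3) = (1, n3)"
proof -
  have map: "\<phi> (gen_comb c1 c2 c3 m1 m2 m3) = gen_comb c1 c2 c3 n1 n2 n3" for c1 c2 c3
    unfolding \<phi>_def gen_comb_def fst_conv snd_conv div_affine_gen_comb[OF \<open>d \<noteq> 0\<close> line] nat_int ..
  show "semigroup_iso (gen_subsemigroup {m1, m2, m3}) (gen_subsemigroup {n1, n2, n3}) \<phi>"
    using gen_comb_eq_if_affine_image[OF \<open>B \<noteq> 0\<close> line] by (intro semigroup_iso_if_gen_comb map)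
  show "\<phi> (1, m1) = (1, n1)" "\<phi> (1, m2) = (1, n2)" "\<phi> (1, m3) = (1, n3)"
    using map[of 1 0 0] map[of 0 1 0] map[of 0 0 1] by (simp_all only: gen_comb_units)
qed

lemma semigroup_iso_if_collinear:
  assumes "m1 \<noteq> m2" "n1 \<noteq> n2"
    and collinear: "int n2 * (int m3 - int m1) = int n1 * (int m3 - int m2) + int n3 * (int m2 - int m1)"
  shows "\<exists>\<phi>. semigroup_iso (gen_subsemigroup {m1, m2, m3}) (gen_subsemigroup {n1, n2, n3}) \<phi>
    \<and> \<phi> (1, m1) = (1, n1) \<and> \<phi> (1, m2) = (1, n2) \<and> \<phi> (1, m3) = (1, n3)"
proof -
  define d where "d = int m2 - int m1"
  define A where "A = int n1 * int m2 - int n2 * int m1"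
  define B where "B = int n2 - int n1"
  have nonzero: "d \<noteq> 0" "B \<noteq> 0"
    using assms(1,2) by (simp_all add: d_def B_def)
  have line: "d * int n1 = A + B * int m1" "d * int n2 = A + B * int m2"
    by (simp_all add: d_def A_def B_def algebra_simps)
  have line3: "d * int n3 = A + B * int m3"
    using collinear by (simp add: d_def A_def B_def algebra_simps)
  show ?thesis
    using semigroup_iso_if_affine_line[OF nonzero line line3] by blast
qed

theorem lemma2p3:
  fixes m1 m2 m3 n1 n2 n3 :: nat
  assumes "m1 \<ge> 1" "m2 \<ge> 1" "m3 \<ge> 1" "n1 \<ge> 1" "n2 \<ge> 1" "n3 \<ge> 1"
    and "m1 \<noteq> m2" "m1 \<noteq> m3" "m2 \<noteq> m3"
    and "n1 \<noteq> n2" "n1 \<noteq> n3" "n2 \<noteq> n3"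
  shows "(\<exists>\<phi>. semigroup_iso (gen_subsemigroup {m1, m2, m3}) (gen_subsemigroup {n1, n2, n3}) \<phi>
              \<and> \<phi> (1, m1) = (1, n1) \<and> \<phi> (1, m2) = (1, n2) \<and> \<phi> (1, m3) = (1, n3))
         \<longleftrightarrow> int n2 * (int m3 - int m1) = int n1 * (int m3 - int m2) + int n3 * (int m2 - int m1)"
proof
  assume "\<exists>\<phi>. semigroup_iso (gen_subsemigroup {m1, m2, m3}) (gen_subsemigroup {n1, n2, n3}) \<phi>
              \<and> \<phi> (1, m1) = (1, n1) \<and> \<phi> (1, m2) = (1, n2) \<and> \<phi> (1, m3) = (1, n3)"
  then show "int n2 * (int m3 - int m1) = int n1 * (int m3 - int m2) + int n3 * (int m2 - int m1)"
    by (elim exE conjE) (rule collinear_if_semigroup_iso[OF \<open>m1 \<noteq> m2\<close>])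
next
  assume "int n2 * (int m3 - int m1) = int n1 * (int m3 - int m2) + int n3 * (int m2 - int m1)"
  then show "\<exists>\<phi>. semigroup_iso (gen_subsemigroup {m1, m2, m3}) (gen_subsemigroup {n1, n2, n3}) \<phi>
              \<and> \<phi> (1, m1) = (1, n1) \<and> \<phi> (1, m2) = (1, n2) \<and> \<phi> (1, m3) = (1, n3)"
    by (rule semigroup_iso_if_collinear[OF \<open>m1 \<noteq> m2\<close> \<open>n1 \<noteq> n2\<close>])
qed

end
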